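(* Let $G=(X,\Sigma,\longrightarrow,X_0)$ and $R=(Z,\Sigma,\longrightarrow,Z_0)$ be automata. If $\Phi$ is a $\Sigma_{ucr}$-simulation from $G$ to $R$ that is uniform w.r.t. $\Sigma_r$, then there exists a $\Sigma_{ucr}$-controllability set from $G$ to $R$.
   Context: An automaton is a 4-tuple $A=(Q,\Sigma,\longrightarrow,Q_0)$ with state set $Q$, finite event set $\Sigma$, ${\longrightarrow}\subseteq Q\times\Sigma\times Q$ and $\emptyset\neq Q_0\subseteq Q$; write $q\xrightarrow{\sigma}q'$ for $(q,\sigma,q')\in{\longrightarrow}$, $q\xrightarrow{\sigma}$ if some such $q'$ exists, extended to strings. A state $q$ is $s$-reachable ($s\in\Sigma^*$) if $q_0\xrightarrow{s}q$ for some initial $q_0$. Events are partitioned into uncontrollable $\Sigma_{uc}$ and controllable $\Sigma_c$; $\Sigma_r\subseteq\Sigma$ is a fixed set of required events. $\Phi\subseteq X\times Z$ is a $\Sigma_{ucr}$-simulation from $G$ to $R$ if (initial state) every $x_0\in X_0$ has $z_0\in Z_0$ with $(x_0,z_0)\in\Phi$; ($\Sigma_{uc}$-forward) for $(x,z)\in\Phi$, $\sigma\in\Sigma_{uc}$, $x\xrightarrow{\sigma}x'$ there is $z'$ with $z\xrightarrow{\sigma}z'$, $(x',z')\in\Phi$; ($\Sigma_r$-backward) for $(x,z)\in\Phi$, $\sigma\in\Sigma_r$, $z\xrightarrow{\sigma}z'$ there is $x'$ with $x\xrightarrow{\sigma}x'$, $(x',z')\in\Phi$. Such $\Phi$ is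 uniform w.r.t. $\Sigma_r$ if for any $(x_1,z_1),(x_2,z_2)\in\Phi$ such that, for some $s\in\Sigma^*$, $x_1,x_2$ are $s$-reachable in $G$ and $z_1,z_2$ are $s$-reachable in $R$: for all $\sigma\in\Sigma_r$ and $x_2'$, if $z_1\xrightarrow{\sigma}$ and $x_2\xrightarrow{\sigma}x_2'$ then there is $z_2'$ with $z_2\xrightarrow{\sigma}z_2'$ and $(x_2',z_2')\in\Phi$. For $W,W'\subseteq X\times Z$: $\mathit{match}_{G,R}(W,\sigma,W')$ iff for all $(x,z)\in W$ and $x\xrightarrow{\sigma}x'$ there is $z'$ with $z\xrightarrow{\sigma}z'$ and $(x',z')\in W'$. $E\subseteq\wp(X\times Z)$ is a $\Sigma_{ucr}$-controllability set from $G$ to $R$ if: (istate) some $W_0\in E$ satisfies $\forall x_0\in X_0\,\exists z_0\in Z_0\,((x_0,z_0)\in W_0)$; (a) for every $W\in E$, $\sigma\in\Sigma_{uc}$ there is $W'\in E$ with $\mathit{match}_{G,R}(W,\sigma,W')$; (b) for every $W\in E$, $(x,z)\in W$, $\sigma\in\Sigma_r$, $z\xrightarrow{\sigma}z'$, there exist $x'$, $W'\in E$ with $x\xrightarrow{\sigma}x'$, $(x',z')\in W'$, $\mathit{match}_{G,R}(W,\sigma,W')$. *)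

theory Defs
  imports Main
begin

record ('q, 'e) automaton =
  states :: "'q set"
  events :: "'e set"
  trans  :: "('q \<times> 'e \<times> 'q) set"
  init   :: "'q set"

definition is_automaton :: "('q, 'e) automaton \<Rightarrow> bool" where
  "is_automaton A \<longleftrightarrow> finite (events A) \<and>
     trans A \<subseteq> states A \<times> events A \<times> states A \<and>
     init A \<subseteq> states A \<and> init A \<noteq> {}"

fun steps :: "('q, 'e) automaton \<Rightarrow> 'q \<Rightarrow> 'e list \<Rightarrow> 'q \<Rightarrow> bool" where
  "steps A q [] q' \<longleftrightarrow> q' = q"
| "steps A q (e # s) q' \<longleftrightarrow> (\<exists>q''. (q, e, q'') \<in> trans A \<and> steps A q'' s q')"

definition reachable_by :: "('q, 'e) automaton \<Rightarrow> 'e list \<Rightarrow> 'q \<Rightarrow> bool" where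
  "reachable_by A s q \<longleftrightarrow> (\<exists>q0 \<in> init A. steps A q0 s q)"

definition enabled :: "('q, 'e) automaton \<Rightarrow> 'q \<Rightarrow> 'e \<Rightarrow> bool" where
  "enabled A q \<sigma> \<longleftrightarrow> (\<exists>q'. (q, \<sigma>, q') \<in> trans A)"

definition ucr_simulation ::
  "'e set \<Rightarrow> 'e set \<Rightarrow> ('x, 'e) automaton \<Rightarrow> ('z, 'e) automaton \<Rightarrow> ('x \<times> 'z) set \<Rightarrow> bool" where
  "ucr_simulation Sigma_uc Sigma_r G R \<Phi> \<longleftrightarrow>
     \<Phi> \<subseteq> states G \<times> states R \<and>
     (\<forall>x0 \<in> init G. \<exists>z0 \<in> init R. (x0, z0) \<in> \<Phi>) \<and>
     (\<forall>x z \<sigma> x'. (x, z) \<in> \<Phi> \<and> \<sigma> \<in> Sigma_uc \<and> (x, \<sigma>, x') \<in> trans G \<longrightarrow>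
        (\<exists>z'. (z, \<sigma>, z') \<in> trans R \<and> (x', z') \<in> \<Phi>)) \<and>
     (\<forall>x z \<sigma> z'. (x, z) \<in> \<Phi> \<and> \<sigma> \<in> Sigma_r \<and> (z, \<sigma>, z') \<in> trans R \<longrightarrow>
        (\<exists>x'. (x, \<sigma>, x') \<in> trans G \<and> (x', z') \<in> \<Phi>))"

definition uniform_sim ::
  "'e set \<Rightarrow> ('x, 'e) automaton \<Rightarrow> ('z, 'e) automaton \<Rightarrow> ('x \<times> 'z) set \<Rightarrow> bool" where
  "uniform_sim Sigma_r G R \<Phi> \<longleftrightarrow>
     (\<forall>x1 z1 x2 z2. (x1, z1) \<in> \<Phi> \<and> (x2, z2) \<in> \<Phi> \<and>
        (\<exists>s \<in> lists (events G). reachable_by G s x1 \<and> reachable_by G s x2 \<and>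
                                reachable_by R s z1 \<and> reachable_by R s z2) \<longrightarrow>
        (\<forall>\<sigma> \<in> Sigma_r. \<forall>x2'. enabled R z1 \<sigma> \<and> (x2, \<sigma>, x2') \<in> trans G \<longrightarrow>
           (\<exists>z2'. (z2, \<sigma>, z2') \<in> trans R \<and> (x2', z2') \<in> \<Phi>)))"

definition match ::
  "('x, 'e) automaton \<Rightarrow> ('z, 'e) automaton \<Rightarrow> ('x \<times> 'z) set \<Rightarrow> 'e \<Rightarrow> ('x \<times> 'z) set \<Rightarrow> bool" where
  "match G R W \<sigma> W' \<longleftrightarrow>
     (\<forall>(x, z) \<in> W. \<forall>x'. (x, \<sigma>, x') \<in> trans G \<longrightarrow>
        (\<exists>z'. (z, \<sigma>, z') \<in> trans R \<and> (x', z') \<in> W'))"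

definition ucr_controllability_set ::
  "'e set \<Rightarrow> 'e set \<Rightarrow> ('x, 'e) automaton \<Rightarrow> ('z, 'e) automaton \<Rightarrow> ('x \<times> 'z) set set \<Rightarrow> bool" where
  "ucr_controllability_set Sigma_uc Sigma_r G R E \<longleftrightarrow>
     E \<subseteq> Pow (states G \<times> states R) \<and>
     (\<exists>W0 \<in> E. \<forall>x0 \<in> init G. \<exists>z0 \<in> init R. (x0, z0) \<in> W0) \<and>
     (\<forall>W \<in> E. \<forall>\<sigma> \<in> Sigma_uc. \<exists>W' \<in> E. match G R W \<sigma> W') \<and>
     (\<forall>W \<in> E. \<forall>(x, z) \<in> W. \<forall>\<sigma> \<in> Sigma_r. \<forall>z'. (z, \<sigma>, z') \<in> trans R \<longrightarrow>
        (\<exists>x' W'. (x, \<sigma>, x') \<in> trans G \<and> W' \<in> E \<and> (x', z') \<in> W' \<and> match G R W \<sigma> W'))"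

end

theory Submission
  imports Defs
begin

text \<open>The controllability set consists of the slices
  \<open>W\<^sub>s = {(x, z) \<in> \<Phi>. x is s-reachable in G and z is s-reachable in R}\<close>, one for each string s.
  Extending s by an event \<sigma> leads from \<open>W\<^sub>s\<close> to \<open>W\<^sub>s\<^sub>\<sigma>\<close>: for uncontrollable \<sigma> this is a match by the
  forward property of \<Phi>, and for required \<sigma> enabled at some state of \<open>W\<^sub>s\<close> it is a match by
  uniformity, which applies because all pairs in \<open>W\<^sub>s\<close> are reached by the same string s.\<close>

definition reachable_slice ::
  "('x, 'e) automaton \<Rightarrow> ('z, 'e) automaton \<Rightarrow> ('x \<times> 'z) set \<Rightarrow> 'e list \<Rightarrow> ('x \<times> 'z) set" where
  "reachable_slice G R \<Phi> s = {(x, z) \<in> \<Phi>. reachable_by G s x \<and> reachable_by R s z}"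

lemma steps_snoc: "steps A q s q1 \<Longrightarrow> (q1, e, q2) \<in> trans A \<Longrightarrow> steps A q (s @ [e]) q2"
  by (induction s arbitrary: q) auto

lemma reachable_by_snoc:
  "reachable_by A s q1 \<Longrightarrow> (q1, e, q2) \<in> trans A \<Longrightarrow> reachable_by A (s @ [e]) q2"
  unfolding reachable_by_def by (auto intro: steps_snoc)

lemma reachable_slice_snoc:
  assumes "(x, z) \<in> reachable_slice G R \<Phi> s" and "(x, e, x') \<in> trans G"
    and "(z, e, z') \<in> trans R" and "(x', z') \<in> \<Phi>"
  shows "(x', z') \<in> reachable_slice G R \<Phi> (s @ [e])"
  using assms by (auto simp: reachable_slice_def intro: reachable_by_snoc)

lemma reachable_slice_Nil_initial:
  assumes "ucr_simulation Sigma_uc Sigma_r G R \<Phi>" and "x0 \<in> init G"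
  shows "\<exists>z0 \<in> init R. (x0, z0) \<in> reachable_slice G R \<Phi> []"
  using assms unfolding ucr_simulation_def reachable_slice_def reachable_by_def by fastforce

lemma match_reachable_slice_uncontrollable:
  assumes "ucr_simulation Sigma_uc Sigma_r G R \<Phi>" and "\<sigma> \<in> Sigma_uc"
  shows "match G R (reachable_slice G R \<Phi> s) \<sigma> (reachable_slice G R \<Phi> (s @ [\<sigma>]))"
  unfolding match_def
proof (clarify)
  fix x z x'
  assume xz: "(x, z) \<in> reachable_slice G R \<Phi> s" and x': "(x, \<sigma>, x') \<in> trans G"
  then obtain z' where "(z, \<sigma>, z') \<in> trans R" "(x', z') \<in> \<Phi>"
    using assms unfolding ucr_simulation_def reachable_slice_def by blast
  then show "\<exists>z'. (z, \<sigma>, z') \<in> trans R \<and> (x', z') \<in> reachable_slice G R \<Phi> (s @ [\<sigma>])"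
    using reachable_slice_snoc[OF xz x'] by blast
qed

lemma match_reachable_slice_required:
  assumes "uniform_sim Sigma_r G R \<Phi>" and "\<sigma> \<in> Sigma_r" and "s \<in> lists (events G)"
    and "(x, z) \<in> reachable_slice G R \<Phi> s" and "enabled R z \<sigma>"
  shows "match G R (reachable_slice G R \<Phi> s) \<sigma> (reachable_slice G R \<Phi> (s @ [\<sigma>]))"
  unfolding match_def
proof (clarify)
  fix x2 z2 x2'
  assume xz2: "(x2, z2) \<in> reachable_slice G R \<Phi> s" and x2': "(x2, \<sigma>, x2') \<in> trans G"
  then obtain z2' where "(z2, \<sigma>, z2') \<in> trans R" "(x2', z2') \<in> \<Phi>"
    using assms unfolding uniform_sim_def reachable_slice_def by blast
  then show "\<exists>z'. (z2, \<sigma>, z') \<in> trans R \<and> (x2', z') \<in> reachable_slice G R \<Phi> (s @ [\<sigma>])"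
    using reachable_slice_snoc[OF xz2 x2'] by blast
qed

lemma reachable_slice_required_backward:
  assumes "ucr_simulation Sigma_uc Sigma_r G R \<Phi>" and "\<sigma> \<in> Sigma_r"
    and "(x, z) \<in> reachable_slice G R \<Phi> s" and z': "(z, \<sigma>, z') \<in> trans R"
  obtains x' where "(x, \<sigma>, x') \<in> trans G" and "(x', z') \<in> reachable_slice G R \<Phi> (s @ [\<sigma>])"
proof -
  obtain x' where x': "(x, \<sigma>, x') \<in> trans G" "(x', z') \<in> \<Phi>"
    using assms unfolding ucr_simulation_def reachable_slice_def by blast
  show thesis
    by (rule that[OF x'(1) reachable_slice_snoc[OF assms(3) x'(1) z' x'(2)]])
qed

lemma ucr_controllability_set_reachable_slices:
  assumes sim: "ucr_simulation Sigma_uc Sigma_r G R \<Phi>" and uni: "uniform_sim Sigma_r G R \<Phi>"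
    and uc: "Sigma_uc \<subseteq> events G" and r: "Sigma_r \<subseteq> events G"
  shows "ucr_controllability_set Sigma_uc Sigma_r G R (reachable_slice G R \<Phi> ` lists (events G))"
    (is "ucr_controllability_set _ _ _ _ ?E")
  unfolding ucr_controllability_set_def
proof (intro conjI)
  have snoc_in_E: "reachable_slice G R \<Phi> (s @ [\<sigma>]) \<in> ?E"
    if "s \<in> lists (events G)" "\<sigma> \<in> events G" for s \<sigma>
    using that by simp
  show "?E \<subseteq> Pow (states G \<times> states R)"
    using sim unfolding ucr_simulation_def reachable_slice_def by auto
  show "\<exists>W0 \<in> ?E. \<forall>x0 \<in> init G. \<exists>z0 \<in> init R. (x0, z0) \<in> W0"
    using reachable_slice_Nil_initial[OF sim] by blast
  show "\<forall>W \<in> ?E. \<forall>\<sigma> \<in> Sigma_uc. \<exists>W' \<in> ?E. match G R W \<sigma> W'"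
  proof (intro ballI)
    fix W \<sigma> assume "W \<in> ?E" "\<sigma> \<in> Sigma_uc"
    from \<open>W \<in> ?E\<close> obtain s where s: "s \<in> lists (events G)" and W: "W = reachable_slice G R \<Phi> s"
      by blast
    have "reachable_slice G R \<Phi> (s @ [\<sigma>]) \<in> ?E"
      using snoc_in_E[OF s] \<open>\<sigma> \<in> Sigma_uc\<close> uc by blast
    then show "\<exists>W' \<in> ?E. match G R W \<sigma> W'"
      unfolding W using match_reachable_slice_uncontrollable[OF sim \<open>\<sigma> \<in> Sigma_uc\<close>] by blast
  qed
  have "\<exists>x' W'. (x, \<sigma>, x') \<in> trans G \<and> W' \<in> ?E \<and> (x', z') \<in> W'
      \<and> match G R (reachable_slice G R \<Phi> s) \<sigma> W'"
    if s: "s \<in> lists (events G)" and xz: "(x, z) \<in> reachable_slice G R \<Phi> s"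
      and \<sigma>: "\<sigma> \<in> Sigma_r" and z': "(z, \<sigma>, z') \<in> trans R" for s x z \<sigma> z'
  proof -
    obtain x' where "(x, \<sigma>, x') \<in> trans G" "(x', z') \<in> reachable_slice G R \<Phi> (s @ [\<sigma>])"
      using reachable_slice_required_backward[OF sim \<sigma> xz z'] .
    moreover have "enabled R z \<sigma>"
      using z' unfolding enabled_def by blast
    then have "match G R (reachable_slice G R \<Phi> s) \<sigma> (reachable_slice G R \<Phi> (s @ [\<sigma>]))"
      by (rule match_reachable_slice_required[OF uni \<sigma> s xz])
    moreover have "reachable_slice G R \<Phi> (s @ [\<sigma>]) \<in> ?E"
      using snoc_in_E[OF s] \<sigma> r by blast
    ultimately show ?thesis
      by blast
  qed
  then show "\<forall>W \<in> ?E. \<forall>(x, z) \<in> W. \<forall>\<sigma> \<in> Sigma_r. \<forall>z'. (z, \<sigma>, z') \<in> trans R \<longrightarrow>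
      (\<exists>x' W'. (x, \<sigma>, x') \<in> trans G \<and> W' \<in> ?E \<and> (x', z') \<in> W' \<and> match G R W \<sigma> W')"
    by blast
qed

theorem lemma5:
  fixes G :: "('x, 'e) automaton" and R :: "('z, 'e) automaton"
    and Sigma_uc Sigma_c Sigma_r :: "'e set" and \<Phi> :: "('x \<times> 'z) set"
  assumes "is_automaton G" and "is_automaton R"
    and "events G = events R"
    and "Sigma_uc \<union> Sigma_c = events G" and "Sigma_uc \<inter> Sigma_c = {}"
    and "Sigma_r \<subseteq> events G"
    and "ucr_simulation Sigma_uc Sigma_r G R \<Phi>"
    and "uniform_sim Sigma_r G R \<Phi>"
  shows "\<exists>E. ucr_controllability_set Sigma_uc Sigma_r G R E"
proof -
  have "Sigma_uc \<subseteq> events G"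
    using assms(4) by blast
  then show ?thesis
    using ucr_controllability_set_reachable_slices[OF assms(7,8)] assms(6) by blast
qed

end
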